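(* Let $D$ be a square-free integer with $D\equiv 2\pmod 4$, let $\mathbb{Z}[\sqrt{D}]=\{x+y\sqrt D:x,y\in\mathbb{Z}\}$, and let $p$ be a prime integer which is irreducible but not prime in $\mathbb{Z}[\sqrt{D}]$, with $p\equiv 3\pmod 4$. Let $z\in I_p(D)$ with $p+\lVert z\rVert/p\equiv 2\pmod 4$. Then $A(p,z)$ does not have property (CZ).
   Context: $\bar z$ is the conjugate and $\lVert z\rVert=z\bar z$ the norm. $I_p(D)$ is the set of all non-unit $z\in\mathbb{Z}[\sqrt{D}]$ such that $z\notin\langle p\rangle$ but there exists $m\notin\langle p\rangle$ with $zm\in\langle p\rangle$ (for such $z$, $p$ divides $\lVert z\rVert$). $A(p,z)=\begin{pmatrix} p & z\\ \bar z & \lVert z\rVert/p\end{pmatrix}$. A matrix $A(p,z)$ has property (CZ) if there exist $a,b,c\in\mathbb{Z}[\sqrt{D}]$ with $a(1-a)=bc$ such that $A(p,z)=\begin{pmatrix} a&b\\ c&1-a\end{pmatrix}\begin{pmatrix}\bar a&\bar c\\ \bar b&1-\bar a\end{pmatrix}$. *)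

theory Defs
  imports "HOL-Computational_Algebra.Computational_Algebra"
begin

text \<open>Elements of Z[sqrt D] are represented as pairs (x,y) of integers standing for x + y sqrt D.
  The ring operations depend on the parameter D.\<close>

type_synonym zsqrt = "int \<times> int"

definition zof :: "int \<Rightarrow> zsqrt" where "zof n = (n, 0)"

definition zadd :: "zsqrt \<Rightarrow> zsqrt \<Rightarrow> zsqrt" where
  "zadd u v = (fst u + fst v, snd u + snd v)"

definition zsub :: "zsqrt \<Rightarrow> zsqrt \<Rightarrow> zsqrt" where
  "zsub u v = (fst u - fst v, snd u - snd v)"

definition zmul :: "int \<Rightarrow> zsqrt \<Rightarrow> zsqrt \<Rightarrow> zsqrt" where
  "zmul D u v = (fst u * fst v + D * snd u * snd v, fst u * snd v + snd u * fst v)"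

definition zconj :: "zsqrt \<Rightarrow> zsqrt" where
  "zconj u = (fst u, - snd u)"

definition znorm :: "int \<Rightarrow> zsqrt \<Rightarrow> int" where
  "znorm D u = fst u ^ 2 - D * snd u ^ 2"

definition zunit :: "int \<Rightarrow> zsqrt \<Rightarrow> bool" where
  "zunit D u \<longleftrightarrow> (\<exists>w. zmul D u w = zof 1)"

definition zdvd :: "int \<Rightarrow> zsqrt \<Rightarrow> zsqrt \<Rightarrow> bool" where
  "zdvd D u v \<longleftrightarrow> (\<exists>w. v = zmul D u w)"

definition in_principal :: "int \<Rightarrow> zsqrt \<Rightarrow> zsqrt \<Rightarrow> bool" where
  "in_principal D u v \<longleftrightarrow> zdvd D u v"

definition zirreducible :: "int \<Rightarrow> zsqrt \<Rightarrow> bool" where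
  "zirreducible D u \<longleftrightarrow> u \<noteq> zof 0 \<and> \<not> zunit D u \<and>
     (\<forall>a b. u = zmul D a b \<longrightarrow> zunit D a \<or> zunit D b)"

definition zprime :: "int \<Rightarrow> zsqrt \<Rightarrow> bool" where
  "zprime D u \<longleftrightarrow> u \<noteq> zof 0 \<and> \<not> zunit D u \<and>
     (\<forall>a b. zdvd D u (zmul D a b) \<longrightarrow> zdvd D u a \<or> zdvd D u b)"

definition Ip :: "int \<Rightarrow> int \<Rightarrow> zsqrt set" where
  "Ip p D = {z. \<not> zunit D z \<and> \<not> in_principal D (zof p) z \<and>
     (\<exists>m. \<not> in_principal D (zof p) m \<and> in_principal D (zof p) (zmul D z m))}"

text \<open>Property (CZ) of A(p,z) = [[p, z], [conj z, N(z)/p]]: there exist a b c with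
  a(1-a) = bc and A(p,z) = [[a,b],[c,1-a]] * [[conj a, conj c],[conj b, 1 - conj a]]
  (the matrix product written out entrywise).\<close>
definition has_CZ :: "int \<Rightarrow> int \<Rightarrow> zsqrt \<Rightarrow> bool" where
  "has_CZ D p z \<longleftrightarrow> (\<exists>a b c.
     zmul D a (zsub (zof 1) a) = zmul D b c \<and>
     zadd (zmul D a (zconj a)) (zmul D b (zconj b)) = zof p \<and>
     zadd (zmul D a (zconj c)) (zmul D b (zsub (zof 1) (zconj a))) = z \<and>
     zadd (zmul D c (zconj a)) (zmul D (zsub (zof 1) a) (zconj b)) = zconj z \<and>
     zadd (zmul D c (zconj c)) (zmul D (zsub (zof 1) a) (zsub (zof 1) (zconj a)))
        = zof (znorm D z div p))"

end

theory Submission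
  imports Defs
begin

text \<open>Everything happens modulo 4. Since \<open>D \<equiv> 2 (mod 4)\<close>, the norm \<open>x\<^sup>2 - D y\<^sup>2\<close> is
  congruent to \<open>(x mod 2) + 2 (y mod 2)\<close>, so norms modulo 4 record the parities of both
  coordinates. The upper left entry of the factorization gives \<open>N a + N b = p \<equiv> 3\<close>, and
  since \<open>N a + N (1 - a) \<equiv> 1\<close> always, the lower right entry together with
  \<open>p + N z / p \<equiv> 2\<close> gives \<open>N b + N c \<equiv> 1\<close>. The parities forced by these two congruences
  contradict the \<open>\<surd>D\<close>-coordinate of \<open>a (1 - a) = b c\<close> read modulo 2.\<close>

lemma zof_eq_iff [simp]: "zof m = zof n \<longleftrightarrow> m = n"
  by (simp add: zof_def)

lemma zadd_zof [simp]: "zadd (zof m) (zof n) = zof (m + n)"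
  by (simp add: zadd_def zof_def)

lemma zsub_zof_zconj: "zsub (zof n) (zconj u) = zconj (zsub (zof n) u)"
  by (simp add: zsub_def zof_def zconj_def)

lemma zmul_zconj_self: "zmul D u (zconj u) = zof (znorm D u)"
  by (simp add: zmul_def zconj_def znorm_def zof_def power2_eq_square)

lemma znorm_mod_4:
  assumes "D mod 4 = 2"
  shows "znorm D u mod 4 = fst u mod 2 + 2 * (snd u mod 2)"
proof -
  obtain k where D: "D = 4 * k + 2"
    using assms by (metis div_mult_mod_eq mult.commute)
  define x y where "x = fst u div 2" and "y = snd u div 2"
  define r s where "r = fst u mod 2" and "s = snd u mod 2"
  have r: "r = 0 \<or> r = 1" and s: "s = 0 \<or> s = 1"
    unfolding r_def s_def by auto
  have "fst u = 2 * x + r" "snd u = 2 * y + s"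
    unfolding x_def r_def y_def s_def by simp_all
  then have "znorm D u = r + 2 * s + 4 * (x\<^sup>2 + x * r - D * (y\<^sup>2 + y * s) - k * s - s)"
    using r s by (auto simp: znorm_def D power2_eq_square algebra_simps)
  also have "\<dots> mod 4 = (r + 2 * s) mod 4"
    by (rule mod_mult_self2)
  also have "\<dots> = r + 2 * s"
    using r s by auto
  finally show ?thesis
    by (simp add: r_def s_def)
qed

lemma znorm_add_mod_4:
  assumes "D mod 4 = 2"
  shows "(znorm D u + znorm D v) mod 4
    = (fst u mod 2 + 2 * (snd u mod 2) + (fst v mod 2 + 2 * (snd v mod 2))) mod 4"
  by (simp only: mod_add_eq [symmetric, of "znorm D u"] znorm_mod_4 [OF assms])

lemma znorm_add_znorm_one_minus_mod_4:
  assumes "D mod 4 = 2"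
  shows "(znorm D u + znorm D (zsub (zof 1) u)) mod 4 = 1"
  unfolding znorm_add_mod_4 [OF assms]
  by (cases "even (fst u)"; cases "even (snd u)"; simp add: zsub_def zof_def mod2_eq_if)

lemma parities_if_znorm_add_mod_4_eq_3:
  assumes "D mod 4 = 2" and "(znorm D u + znorm D v) mod 4 = 3"
  shows "odd (fst u + fst v)" and "odd (snd u + snd v)"
  using assms(2) unfolding znorm_add_mod_4 [OF assms(1)]
  by (cases "even (fst u)"; cases "even (fst v)"; cases "even (snd u)"; cases "even (snd v)";
      simp add: mod2_eq_if)+

lemma parities_if_znorm_add_mod_4_eq_1:
  assumes "D mod 4 = 2" and "(znorm D u + znorm D v) mod 4 = 1"
  shows "odd (fst u + fst v)" and "even (snd u + snd v)"
  using assms(2) unfolding znorm_add_mod_4 [OF assms(1)]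
  by (cases "even (fst u)"; cases "even (fst v)"; cases "even (snd u)"; cases "even (snd v)";
      simp add: mod2_eq_if)+

lemma zmul_one_minus_neq_zmul:
  assumes D: "D mod 4 = 2"
    and ab: "(znorm D a + znorm D b) mod 4 = 3"
    and bc: "(znorm D b + znorm D c) mod 4 = 1"
  shows "zmul D a (zsub (zof 1) a) \<noteq> zmul D b c"
proof
  assume eq: "zmul D a (zsub (zof 1) a) = zmul D b c"
  have snd_eq: "snd a - 2 * fst a * snd a = fst b * snd c + snd b * fst c"
    using arg_cong [OF eq, of snd] by (simp add: zmul_def zsub_def zof_def algebra_simps)
  have "even (snd a) \<longleftrightarrow> even (snd a - 2 * fst a * snd a)"
    by simp
  then have a2: "even (snd a) \<longleftrightarrow> even (fst b * snd c + snd b * fst c)"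
    unfolding snd_eq .
  have a2b2: "odd (snd a + snd b)"
    using parities_if_znorm_add_mod_4_eq_3 [OF D ab] by simp
  have b1c1: "odd (fst b + fst c)" and b2c2: "even (snd b + snd c)"
    using parities_if_znorm_add_mod_4_eq_1 [OF D bc] by simp_all
  show False
  proof (cases "even (fst b)")
    case True
    with b1c1 have "odd (fst c)" by simp
    with True a2 have "even (snd a) \<longleftrightarrow> even (snd b)" by simp
    with a2b2 show False by simp
  next
    case False
    with b1c1 have "even (fst c)" by simp
    with False a2 b2c2 have "even (snd a) \<longleftrightarrow> even (snd b)" by simp
    with a2b2 show False by simp
  qed
qed

theorem corollary3p8:
  fixes D p :: int and z :: zsqrt
  assumes "squarefree D" and "D mod 4 = 2"
    and "prime p" and "zirreducible D (zof p)" and "\<not> zprime D (zof p)"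
    and "p mod 4 = 3"
    and "z \<in> Ip p D"
    and "(p + znorm D z div p) mod 4 = 2"
  shows "\<not> has_CZ D p z"
proof
  assume "has_CZ D p z"
  then obtain a b c where
    eq: "zmul D a (zsub (zof 1) a) = zmul D b c" and
    p: "zadd (zmul D a (zconj a)) (zmul D b (zconj b)) = zof p" and
    q: "zadd (zmul D c (zconj c)) (zmul D (zsub (zof 1) a) (zsub (zof 1) (zconj a)))
        = zof (znorm D z div p)"
    unfolding has_CZ_def by blast
  have p_eq: "znorm D a + znorm D b = p"
    using p by (simp add: zmul_zconj_self)
  have q_eq: "znorm D c + znorm D (zsub (zof 1) a) = znorm D z div p"
    using q by (simp add: zsub_zof_zconj zmul_zconj_self)
  have "(znorm D a + znorm D b + (znorm D c + znorm D (zsub (zof 1) a))) mod 4 = 2"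
    unfolding p_eq q_eq by (fact assms(8))
  with znorm_add_znorm_one_minus_mod_4 [OF assms(2), of a]
  have "(znorm D b + znorm D c) mod 4 = 1"
    by presburger
  with assms(2,6) p_eq eq show False
    using zmul_one_minus_neq_zmul by blast
qed

end
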